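(* Let $d\ge1$, $\delta>0$, and let $F:[-\delta,1+\delta]^d\to\mathbb{R}$ be convex, continuous, and continuously differentiable on $(-\delta,1+\delta)^d$. Then for every $\epsilon>0$ there exist $n\ge1$, $t>0$, $\boldsymbol{W}\in\mathbb{R}^{n\times d}$ and $\boldsymbol{a}\in\mathbb{R}^n$ such that $$\sup_{\boldsymbol{x}\in[0,1]^d}\big\|\nabla F(\boldsymbol{x})-\boldsymbol{W}^\top\mathrm{softmax}\big(t(\boldsymbol{W}\boldsymbol{x}+\boldsymbol{a})\big)\big\|<\epsilon .$$ Each such approximator $\boldsymbol{x}\mapsto\boldsymbol{W}^\top\mathrm{softmax}(t(\boldsymbol{W}\boldsymbol{x}+\boldsymbol{a}))$ is the gradient of the convex function $\boldsymbol{x}\mapsto\mathrm{LSE}_t(\{\boldsymbol{w}_i^\top\boldsymbol{x}+a_i\}_{i=1}^n)$, where $\boldsymbol{w}_i^\top$ is the $i$th row of $\boldsymbol{W}$.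
   Context: $\mathrm{softmax}(\boldsymbol{z})_i=e^{z_i}/\sum_j e^{z_j}$ for $\boldsymbol{z}\in\mathbb{R}^n$. For $t>0$ and a finite set $\mathcal{U}\subset\mathbb{R}$, $\mathrm{LSE}_t(\mathcal{U})=\frac1t\log\sum_{u\in\mathcal{U}}e^{tu}$. $\|\cdot\|$ is the Euclidean norm. *)

theory Defs
  imports "HOL-Analysis.Analysis"
begin

text \<open>Vectors in R^n with n varying are encoded as functions nat => _ on indices i < n.
  A matrix W in R^(n x d) is given by its rows W i :: real^'d, i < n.\<close>

definition softmax :: "nat \<Rightarrow> (nat \<Rightarrow> real) \<Rightarrow> nat \<Rightarrow> real" where
  "softmax n z i = exp (z i) / (\<Sum>j<n. exp (z j))"

definition LSE :: "nat \<Rightarrow> real \<Rightarrow> (nat \<Rightarrow> real) \<Rightarrow> real" where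
  "LSE n t u = (1 / t) * ln (\<Sum>i<n. exp (t * u i))"

text \<open>W^T softmax(t(Wx+a)) = sum_i softmax(..)_i * w_i\<close>
definition softmax_approx ::
  "nat \<Rightarrow> real \<Rightarrow> (nat \<Rightarrow> real^'d) \<Rightarrow> (nat \<Rightarrow> real) \<Rightarrow> real^'d \<Rightarrow> real^'d" where
  "softmax_approx n t W a x =
     (\<Sum>i<n. softmax n (\<lambda>k. t * (W k \<bullet> x + a k)) i *\<^sub>R W i)"

definition closed_cube :: "real \<Rightarrow> real \<Rightarrow> (real^'d) set" where
  "closed_cube l u = {x. \<forall>i. l \<le> x $ i \<and> x $ i \<le> u}"

definition open_cube :: "real \<Rightarrow> real \<Rightarrow> (real^'d) set" where
  "open_cube l u = {x. \<forall>i. l < x $ i \<and> x $ i < u}"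

end

theory Submission
  imports Defs
begin

text \<open>The tangent planes of F at a fine finite net of a compact neighbourhood K of the unit cube
  have a maximum that is uniformly close to F on K, and the LSE with temperature t of n numbers
  exceeds their maximum by at most ln n / t; so for large t the convex function g given by the
  LSE of these planes approximates F uniformly on K. For convex functions, uniform closeness of
  values forces closeness of gradients wherever one gradient is uniformly continuous: comparing
  the tangent inequality of g at x with that of F at x + h, where h has length r and points along
  grad g(x) - grad F(x), bounds that difference by the oscillation of grad F on the r-ball plus
  2 sup |g - F| / r. Finally, grad g(x) is exactly W^T softmax(t(Wx + a)).\<close>

lemma convex_on_ge_tangent:
  fixes f :: "'a::real_normed_vector \<Rightarrow> real"
  assumes f: "convex_on S f" and "x \<in> S" "y \<in> S" and L: "(f has_derivative L) (at x)"
  shows "f x + L (y - x) \<le> f y"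
proof -
  let ?\<phi> = "\<lambda>u. f (x + u *\<^sub>R (y - x))"
  have "((\<lambda>u. x + u *\<^sub>R (y - x)) has_derivative (\<lambda>u. u *\<^sub>R (y - x))) (at 0)"
    by (auto intro!: derivative_eq_intros)
  then have "(?\<phi> has_derivative (\<lambda>u. L (u *\<^sub>R (y - x)))) (at 0)"
    using has_derivative_compose[of "\<lambda>u. x + u *\<^sub>R (y - x)" _ 0 UNIV f L] L by simp
  moreover have "(\<lambda>u. L (u *\<^sub>R (y - x))) = (*) (L (y - x))"
    using has_derivative_linear[OF L] by (auto simp: linear_scale mult.commute)
  ultimately have "(?\<phi> has_field_derivative L (y - x)) (at 0 within {0<..})"
    by (simp add: has_field_derivative_def has_derivative_at_withinI)
  then have "((\<lambda>u. (?\<phi> u - f x) / u) \<longlongrightarrow> L (y - x)) (at_right 0)"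
    by (simp add: has_field_derivative_iff)
  moreover have "\<forall>\<^sub>F u in at_right 0. (?\<phi> u - f x) / u \<le> f y - f x"
    using eventually_at_right_real[of 0 1, simplified]
  proof eventually_elim
    case (elim u)
    have "?\<phi> u = f ((1 - u) *\<^sub>R x + u *\<^sub>R y)" by (simp add: algebra_simps)
    also have "\<dots> \<le> (1 - u) * f x + u * f y"
      using elim assms(2,3) by (intro convex_onD[OF f]) auto
    finally have "?\<phi> u - f x \<le> (f y - f x) * u" by (simp add: algebra_simps)
    then show ?case using elim by (simp add: divide_le_eq)
  qed
  ultimately have "L (y - x) \<le> f y - f x"
    by (intro tendsto_upperbound) auto
  then show ?thesis by simp
qed

lemma sum_exp_pos: "(n::nat) \<ge> 1 \<Longrightarrow> (\<Sum>i<n. exp (u i :: real)) > 0"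
  by (intro sum_pos) (auto simp: lessThan_empty_iff)

lemma exp_mult_LSE: "t > 0 \<Longrightarrow> n \<ge> 1 \<Longrightarrow> exp (t * LSE n t u) = (\<Sum>i<n. exp (t * u i))"
  using sum_exp_pos[of n] by (simp add: LSE_def)

lemma member_le_LSE:
  assumes "t > 0" "j < n"
  shows "u j \<le> LSE n t u"
proof -
  have "exp (t * u j) \<le> (\<Sum>i<n. exp (t * u i))"
    using assms(2) by (intro member_le_sum) auto
  then have "exp (t * u j) \<le> exp (t * LSE n t u)"
    using assms by (simp add: exp_mult_LSE)
  then show ?thesis using assms(1) by simp
qed

lemma LSE_le:
  assumes "t > 0" "n \<ge> 1" "\<And>i. i < n \<Longrightarrow> u i \<le> M"
  shows "LSE n t u \<le> M + ln (real n) / t"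
proof -
  have "exp (t * LSE n t u) \<le> (\<Sum>i<n. exp (t * M))"
    using assms by (simp only: exp_mult_LSE) (intro sum_mono, simp)
  also have "\<dots> = exp (t * (M + ln (real n) / t))"
    using assms(1,2) by (simp add: distrib_left exp_add)
  finally show ?thesis using assms(1) by simp
qed

lemma LSE_convex_combination:
  assumes t: "t > 0" and n: "n \<ge> 1" and l: "0 \<le> l" "l \<le> 1"
  shows "LSE n t (\<lambda>i. (1 - l) * u i + l * v i) \<le> (1 - l) * LSE n t u + l * LSE n t v"
proof -
  define U V where "U = LSE n t u" and "V = LSE n t v"
  define R where "R = (1 - l) * U + l * V"
  \<comment> \<open>Termwise convexity of exp; the weights exp (t u i) / exp (t U) sum to 1, and so do those for v.\<close>
  have "exp (t * ((1 - l) * u i + l * v i))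
      \<le> exp (t * R) * ((1 - l) * (exp (t * u i) / exp (t * U)) + l * (exp (t * v i) / exp (t * V)))"
    for i
  proof -
    have "exp (t * ((1 - l) * u i + l * v i))
        = exp (t * R) * exp ((1 - l) * (t * u i - t * U) + l * (t * v i - t * V))"
      by (simp add: R_def exp_add[symmetric] algebra_simps)
    also have "exp ((1 - l) * (t * u i - t * U) + l * (t * v i - t * V))
        \<le> (1 - l) * exp (t * u i - t * U) + l * exp (t * v i - t * V)"
      using convex_onD[OF exp_convex, of l] l by simp
    finally show ?thesis by (simp add: exp_diff)
  qed
  then have "exp (t * LSE n t (\<lambda>i. (1 - l) * u i + l * v i))
      \<le> (\<Sum>i<n. exp (t * R) * ((1 - l) * (exp (t * u i) / exp (t * U)) + l * (exp (t * v i) / exp (t * V))))"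
    using t n by (simp only: exp_mult_LSE) (rule sum_mono)
  also have "\<dots> = exp (t * R) * ((1 - l) * (\<Sum>i<n. exp (t * u i) / exp (t * U))
      + l * (\<Sum>i<n. exp (t * v i) / exp (t * V)))"
    by (simp add: sum_distrib_left sum.distrib distrib_left mult_ac)
  also have "\<dots> = exp (t * R)"
    using t n sum_exp_pos[OF n, of "\<lambda>i. t * u i"] sum_exp_pos[OF n, of "\<lambda>i. t * v i"]
    by (simp add: U_def V_def exp_mult_LSE sum_divide_distrib[symmetric])
  finally show ?thesis using t by (simp add: R_def U_def V_def)
qed

lemma convex_on_LSE_affine:
  fixes W :: "nat \<Rightarrow> 'a::real_inner"
  assumes "t > 0" "n \<ge> 1"
  shows "convex_on UNIV (\<lambda>x. LSE n t (\<lambda>i. W i \<bullet> x + a i))"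
proof (rule convex_onI)
  fix l :: real and x y :: 'a
  assume "0 < l" "l < 1"
  moreover have "(\<lambda>i. W i \<bullet> ((1 - l) *\<^sub>R x + l *\<^sub>R y) + a i)
      = (\<lambda>i. (1 - l) * (W i \<bullet> x + a i) + l * (W i \<bullet> y + a i))"
    by (auto simp: inner_add_right algebra_simps)
  ultimately show "LSE n t (\<lambda>i. W i \<bullet> ((1 - l) *\<^sub>R x + l *\<^sub>R y) + a i)
      \<le> (1 - l) * LSE n t (\<lambda>i. W i \<bullet> x + a i) + l * LSE n t (\<lambda>i. W i \<bullet> y + a i)"
    using LSE_convex_combination[OF assms] by simp
qed simp

lemma LSE_affine_has_derivative:
  fixes W :: "nat \<Rightarrow> real^'d"
  assumes t: "t > 0" and n: "n \<ge> 1"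
  shows "((\<lambda>y. LSE n t (\<lambda>i. W i \<bullet> y + a i)) has_derivative
           (\<lambda>h. softmax_approx n t W a x \<bullet> h)) (at x)"
proof -
  define S where "S = (\<Sum>i<n. exp (t * (W i \<bullet> x + a i)))"
  have S: "S > 0" unfolding S_def using sum_exp_pos[OF n] .
  have "((\<lambda>y. (1 / t) * ln (\<Sum>i<n. exp (t * (W i \<bullet> y + a i)))) has_derivative
      (\<lambda>h. (1 / t) * ((\<Sum>i<n. exp (t * (W i \<bullet> x + a i)) * (t * (W i \<bullet> h))) / S))) (at x)"
    using S unfolding S_def
    by (auto intro!: derivative_eq_intros ext simp: divide_inverse mult_ac)
  moreover have "(1 / t) * ((\<Sum>i<n. exp (t * (W i \<bullet> x + a i)) * (t * (W i \<bullet> h))) / S)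
      = softmax_approx n t W a x \<bullet> h" for h
    using t by (simp add: softmax_approx_def softmax_def S_def inner_sum_left
        sum_divide_distrib sum_distrib_left field_simps)
  ultimately show ?thesis by (simp add: LSE_def)
qed

lemma finite_net_of_tangent_planes:
  fixes f :: "'a::real_inner \<Rightarrow> real"
  assumes K: "compact K" and f: "continuous_on K f" and D: "bounded (D ` K)" and \<eta>: "\<eta> > 0"
  obtains N where "finite N" "N \<subseteq> K" "\<And>z. z \<in> K \<Longrightarrow> \<exists>y\<in>N. f z - \<eta> \<le> f y + D y \<bullet> (z - y)"
proof -
  obtain B where B: "B > 0" "\<And>y. y \<in> K \<Longrightarrow> norm (D y) \<le> B"
    using D by (auto simp: bounded_pos)
  have "uniformly_continuous_on K f" using compact_uniformly_continuous[OF f K] .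
  then obtain \<rho>\<^sub>f where \<rho>\<^sub>f: "\<rho>\<^sub>f > 0"
    "\<forall>z\<in>K. \<forall>y\<in>K. dist y z < \<rho>\<^sub>f \<longrightarrow> dist (f y) (f z) < \<eta> / 2"
    unfolding uniformly_continuous_on_def using half_gt_zero[OF \<eta>] by blast
  define \<rho> where "\<rho> = min \<rho>\<^sub>f (\<eta> / (2 * B))"
  have "\<rho> > 0" using \<rho>\<^sub>f B \<eta> by (simp add: \<rho>_def)
  then obtain N where N: "finite N" "N \<subseteq> K" "K \<subseteq> (\<Union>y\<in>N. ball y \<rho>)"
    using seq_compact_imp_totally_bounded[OF compact_imp_seq_compact[OF K]] by meson
  have "\<exists>y\<in>N. f z - \<eta> \<le> f y + D y \<bullet> (z - y)" if z: "z \<in> K" for z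
  proof -
    obtain y where y: "y \<in> N" "dist y z < \<rho>" using N(3) z by auto
    have "y \<in> K" "dist y z < \<rho>\<^sub>f" using y N(2) by (auto simp: \<rho>_def)
    then have "\<bar>f y - f z\<bar> < \<eta> / 2"
      using \<rho>\<^sub>f(2) z by (simp add: dist_real_def)
    moreover have "\<bar>D y \<bullet> (z - y)\<bar> \<le> \<eta> / 2"
    proof -
      have "\<bar>D y \<bullet> (z - y)\<bar> \<le> norm (D y) * norm (z - y)" by (rule Cauchy_Schwarz_ineq2)
      also have "\<dots> \<le> B * (\<eta> / (2 * B))"
        using B \<open>y \<in> K\<close> y(2) by (intro mult_mono) (simp_all add: \<rho>_def dist_norm norm_minus_commute)
      also have "\<dots> = \<eta> / 2" using B(1) by simp
      finally show ?thesis .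
    qed
    ultimately have "f z - \<eta> \<le> f y + D y \<bullet> (z - y)" by arith
    then show ?thesis using y(1) by blast
  qed
  then show ?thesis using N(1,2) that by blast
qed

lemma convex_uniform_approx_by_LSE:
  fixes f :: "'a::real_inner \<Rightarrow> real"
  assumes K: "compact K" "K \<noteq> {}" and f: "continuous_on K f" and D: "bounded (D ` K)"
    and tangent: "\<And>y z. y \<in> K \<Longrightarrow> z \<in> K \<Longrightarrow> f y + D y \<bullet> (z - y) \<le> f z"
    and \<eta>: "\<eta> > 0"
  obtains n t W a where "n \<ge> 1" "t > 0"
    "\<And>z. z \<in> K \<Longrightarrow> \<bar>LSE n t (\<lambda>i. W i \<bullet> z + a i) - f z\<bar> \<le> \<eta>"
proof -
  obtain N where N: "finite N" "N \<subseteq> K" "\<And>z. z \<in> K \<Longrightarrow> \<exists>y\<in>N. f z - \<eta> \<le> f y + D y \<bullet> (z - y)"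
    using finite_net_of_tangent_planes[OF K(1) f D \<eta>] by blast
  obtain ys where ys: "set ys = N" using finite_list[OF N(1)] by blast
  define n where "n = length ys"
  have "N \<noteq> {}" using K(2) N(3) by blast
  then have n: "n \<ge> 1" using ys by (cases ys) (auto simp: n_def)
  define W where "W i = D (ys ! i)" for i
  define a where "a i = f (ys ! i) - D (ys ! i) \<bullet> ys ! i" for i
  define t where "t = 2 * (ln (real n) + 1) / \<eta>"
  have t: "t > 0" using n \<eta> by (simp add: t_def add_nonneg_pos)
  have "ln (real n) / t \<le> \<eta>"
  proof -
    have "0 \<le> ln (real n)" using n by simp
    then show ?thesis using \<eta> by (simp add: t_def field_simps)
  qed
  have plane: "W i \<bullet> z + a i = f (ys ! i) + D (ys ! i) \<bullet> (z - ys ! i)" for i z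
    by (simp add: W_def a_def inner_diff_right)
  have "f z - \<eta> \<le> LSE n t (\<lambda>i. W i \<bullet> z + a i)" if z: "z \<in> K" for z
  proof -
    obtain j where "j < n" "f z - \<eta> \<le> W j \<bullet> z + a j"
      using N(3)[OF z] ys by (auto simp: plane n_def in_set_conv_nth)
    then show ?thesis using member_le_LSE[OF t] by (meson order_trans)
  qed
  moreover have "LSE n t (\<lambda>i. W i \<bullet> z + a i) \<le> f z + \<eta>" if "z \<in> K" for z
  proof -
    have "LSE n t (\<lambda>i. W i \<bullet> z + a i) \<le> f z + ln (real n) / t"
      using ys N(2) that by (intro LSE_le[OF t n]) (auto simp: plane n_def intro!: tangent)
    then show ?thesis using \<open>ln (real n) / t \<le> \<eta>\<close> by simp
  qed
  ultimately show ?thesis by (intro that[of n t W a, OF n t]) (fastforce simp: abs_le_iff)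
qed

lemma convex_gradient_dist_le:
  fixes f g :: "'a::real_inner \<Rightarrow> real"
  assumes r: "r > 0"
    and f: "convex_on (cball x r) f" "\<And>y. y \<in> cball x r \<Longrightarrow> (f has_derivative (\<lambda>h. Df y \<bullet> h)) (at y)"
    and g: "convex_on (cball x r) g" "(g has_derivative (\<lambda>h. Dg \<bullet> h)) (at x)"
    and close: "\<And>y. y \<in> cball x r \<Longrightarrow> \<bar>g y - f y\<bar> \<le> \<eta>"
    and osc: "\<And>y. y \<in> cball x r \<Longrightarrow> norm (Df y - Df x) \<le> \<kappa>"
  shows "norm (Dg - Df x) \<le> \<kappa> + 2 * \<eta> / r"
proof (cases "Dg = Df x")
  case True
  then show ?thesis using close[of x] osc[of x] r by simp
next
  case False
  define v where "v = Dg - Df x"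
  have v: "norm v > 0" using False by (simp add: v_def)
  define h where "h = (r / norm v) *\<^sub>R v"
  have h: "norm h = r" using v r by (simp add: h_def)
  have x: "x \<in> cball x r" and xh: "x + h \<in> cball x r" using r h by (auto simp: dist_norm)
  have "Dg \<bullet> h \<le> g (x + h) - g x"
    using convex_on_ge_tangent[OF g(1) x xh g(2)] by simp
  moreover have "f (x + h) - f x \<le> Df (x + h) \<bullet> h"
    using convex_on_ge_tangent[OF f(1) xh x f(2)[OF xh]] by (simp add: inner_diff_right)
  moreover have "(Df (x + h) - Df x) \<bullet> h \<le> \<kappa> * r"
    using norm_cauchy_schwarz[of "Df (x + h) - Df x" h] osc[OF xh] h r
    by (smt (verit) mult_right_mono)
  moreover have "g (x + h) - g x \<le> f (x + h) - f x + 2 * \<eta>"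
    using close[OF x] close[OF xh] by linarith
  ultimately have "v \<bullet> h \<le> \<kappa> * r + 2 * \<eta>"
    by (simp add: v_def inner_diff_left)
  moreover have "v \<bullet> h = r * norm v"
    using v by (simp add: h_def dot_square_norm power2_eq_square)
  ultimately have "r * norm v \<le> r * (\<kappa> + 2 * \<eta> / r)"
    using r by (simp add: algebra_simps)
  then show ?thesis using r by (simp add: v_def)
qed

lemma convex_gradient_approx_of_uniform_approx:
  fixes F :: "'a::real_inner \<Rightarrow> real"
  assumes F: "convex_on S F" "\<And>x. x \<in> S \<Longrightarrow> (F has_derivative (\<lambda>h. G x \<bullet> h)) (at x)"
    and G: "continuous_on S G"
    and K: "compact K" "K \<subseteq> S"
    and r: "r > 0" "\<And>x. x \<in> C \<Longrightarrow> cball x r \<subseteq> K"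
    and \<epsilon>: "\<epsilon> > 0"
  obtains \<eta> where "\<eta> > 0"
    "\<And>g Dg x. convex_on UNIV g \<Longrightarrow> (g has_derivative (\<lambda>h. Dg \<bullet> h)) (at x) \<Longrightarrow> x \<in> C \<Longrightarrow>
       (\<And>z. z \<in> K \<Longrightarrow> \<bar>g z - F z\<bar> \<le> \<eta>) \<Longrightarrow> norm (Dg - G x) \<le> \<epsilon>"
proof -
  have "uniformly_continuous_on K G"
    using compact_uniformly_continuous[OF continuous_on_subset[OF G K(2)] K(1)] .
  then obtain \<rho>\<^sub>G where \<rho>\<^sub>G: "\<rho>\<^sub>G > 0"
    "\<forall>x\<in>K. \<forall>y\<in>K. dist y x < \<rho>\<^sub>G \<longrightarrow> dist (G y) (G x) < \<epsilon> / 2"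
    unfolding uniformly_continuous_on_def using half_gt_zero[OF \<epsilon>] by blast
  define \<rho> where "\<rho> = min r (\<rho>\<^sub>G / 2)"
  have \<rho>: "\<rho> > 0" "\<rho> < \<rho>\<^sub>G" using r \<rho>\<^sub>G by (auto simp: \<rho>_def)
  define \<eta> where "\<eta> = \<epsilon> * \<rho> / 4"
  have "norm (Dg - G x) \<le> \<epsilon>"
    if g: "convex_on UNIV g" "(g has_derivative (\<lambda>h. Dg \<bullet> h)) (at x)" and x: "x \<in> C"
      and close: "\<And>z. z \<in> K \<Longrightarrow> \<bar>g z - F z\<bar> \<le> \<eta>" for g Dg x
  proof -
    have ball: "cball x \<rho> \<subseteq> K" using r(2)[OF x] by (auto simp: \<rho>_def)
    have "norm (Dg - G x) \<le> \<epsilon> / 2 + 2 * \<eta> / \<rho>"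
    proof (rule convex_gradient_dist_le[OF \<rho>(1), where f = F and Df = G])
      show "convex_on (cball x \<rho>) F" "convex_on (cball x \<rho>) g"
        using ball K(2) by (auto intro: convex_on_subset[OF F(1)] convex_on_subset[OF g(1)])
      show "(F has_derivative (\<lambda>h. G y \<bullet> h)) (at y)" if "y \<in> cball x \<rho>" for y
        using that ball K(2) by (blast intro: F(2))
      show "\<bar>g y - F y\<bar> \<le> \<eta>" if "y \<in> cball x \<rho>" for y
        using that ball by (blast intro: close)
      show "norm (G y - G x) \<le> \<epsilon> / 2" if "y \<in> cball x \<rho>" for y
      proof -
        have "y \<in> K" "x \<in> K" "dist y x < \<rho>\<^sub>G"
          using that ball \<rho> by (auto simp: dist_commute)
        then show ?thesis using \<rho>\<^sub>G(2) by (simp add: dist_norm less_imp_le)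
      qed
    qed (use g(2) in simp)
    also have "\<epsilon> / 2 + 2 * \<eta> / \<rho> = \<epsilon>" using \<rho> by (simp add: \<eta>_def)
    finally show ?thesis .
  qed
  moreover have "\<eta> > 0" using \<epsilon> \<rho> by (simp add: \<eta>_def)
  ultimately show ?thesis using that by blast
qed

lemma softmax_approx_of_convex_gradient:
  fixes F :: "real^'d \<Rightarrow> real" and G :: "real^'d \<Rightarrow> real^'d"
  assumes F: "convex_on S F" "\<And>x. x \<in> S \<Longrightarrow> (F has_derivative (\<lambda>h. G x \<bullet> h)) (at x)"
    and G: "continuous_on S G"
    and K: "compact K" "K \<subseteq> S"
    and r: "r > 0" "\<And>x. x \<in> C \<Longrightarrow> cball x r \<subseteq> K"
    and \<epsilon>: "\<epsilon> > 0"
  obtains n t W a where "n \<ge> 1" "t > 0"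
    "\<And>x. x \<in> C \<Longrightarrow> norm (G x - softmax_approx n t W a x) \<le> \<epsilon>"
proof (cases "C = {}")
  case True
  then show ?thesis by (intro that[of 1 1]) auto
next
  case False
  then have "K \<noteq> {}" using r by (metis all_not_in_conv centre_in_cball less_imp_le subsetD)
  obtain \<eta> where \<eta>: "\<eta> > 0"
    and grad: "\<And>g Dg x. convex_on UNIV g \<Longrightarrow> (g has_derivative (\<lambda>h. Dg \<bullet> h)) (at x) \<Longrightarrow> x \<in> C \<Longrightarrow>
       (\<And>z. z \<in> K \<Longrightarrow> \<bar>g z - F z\<bar> \<le> \<eta>) \<Longrightarrow> norm (Dg - G x) \<le> \<epsilon>"
    using convex_gradient_approx_of_uniform_approx[OF F G K r \<epsilon>] by blast
  have "continuous_on K F"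
    using K(2) by (intro continuous_at_imp_continuous_on ballI has_derivative_continuous[OF F(2)]) auto
  moreover have "bounded (G ` K)"
    using compact_imp_bounded[OF compact_continuous_image[OF continuous_on_subset[OF G K(2)] K(1)]] .
  moreover have "F y + G y \<bullet> (z - y) \<le> F z" if "y \<in> K" "z \<in> K" for y z
    using that K(2) by (blast intro: convex_on_ge_tangent[OF F(1)] F(2))
  ultimately obtain n t W a where n: "n \<ge> 1" and t: "t > 0"
    and close: "\<And>z. z \<in> K \<Longrightarrow> \<bar>LSE n t (\<lambda>i. W i \<bullet> z + a i) - F z\<bar> \<le> \<eta>"
    using convex_uniform_approx_by_LSE[OF K(1) \<open>K \<noteq> {}\<close> _ _ _ \<eta>] by blast
  show ?thesis
  proof (rule that[OF n t])
    fix x assume "x \<in> C"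
    then show "norm (G x - softmax_approx n t W a x) \<le> \<epsilon>"
      using grad[OF convex_on_LSE_affine[OF t n] LSE_affine_has_derivative[OF t n] _ close]
      by (simp add: norm_minus_commute)
  qed
qed

lemma closed_cube_eq_cbox: "closed_cube l u = cbox (vec l) (vec u :: real^'d)"
  by (auto simp: closed_cube_def mem_box_cart)

lemma open_cube_eq_box: "open_cube l u = box (vec l) (vec u :: real^'d)"
  by (auto simp: open_cube_def mem_box_cart)

lemma closed_cube_subset_open_cube:
  assumes "l' < l" "u < u'"
  shows "closed_cube l u \<subseteq> (open_cube l' u' :: (real^'d) set)"
  using assms by (auto simp: closed_cube_def open_cube_def intro: less_le_trans le_less_trans)

lemma open_cube_subset_closed_cube: "open_cube l u \<subseteq> (closed_cube l u :: (real^'d) set)"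
  by (auto simp: closed_cube_def open_cube_def less_imp_le)

lemma cball_subset_closed_cube:
  assumes "x \<in> closed_cube l u"
  shows "cball x r \<subseteq> (closed_cube (l - r) (u + r) :: (real^'d) set)"
proof
  fix y :: "real^'d" assume "y \<in> cball x r"
  then have "\<bar>y $ i - x $ i\<bar> \<le> r" for i
    using component_le_norm_cart[of "y - x" i] by (simp add: dist_norm norm_minus_commute)
  moreover have "l \<le> x $ i \<and> x $ i \<le> u" for i
    using assms by (simp add: closed_cube_def)
  ultimately show "y \<in> closed_cube (l - r) (u + r)"
    by (simp add: closed_cube_def abs_le_iff) (smt (verit))
qed

theorem theorem1:
  fixes F :: "real^'d \<Rightarrow> real" and gradF :: "real^'d \<Rightarrow> real^'d" and \<delta> :: real
  assumes "\<delta> > 0"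
    and "convex_on (closed_cube (-\<delta>) (1+\<delta>)) F"
    and "continuous_on (closed_cube (-\<delta>) (1+\<delta>)) F"
    and "\<And>x. x \<in> open_cube (-\<delta>) (1+\<delta>) \<Longrightarrow>
           (F has_derivative (\<lambda>h. gradF x \<bullet> h)) (at x)"
    and "continuous_on (open_cube (-\<delta>) (1+\<delta>)) gradF"
  shows "(\<forall>\<epsilon>>0. \<exists>n::nat. \<exists>t::real. \<exists>W::nat \<Rightarrow> real^'d. \<exists>a::nat \<Rightarrow> real.
            n \<ge> 1 \<and> t > 0 \<and>
            (SUP x\<in>closed_cube 0 1. norm (gradF x - softmax_approx n t W a x)) < \<epsilon>)
       \<and> (\<forall>n::nat. \<forall>t::real. \<forall>W::nat \<Rightarrow> real^'d. \<forall>a::nat \<Rightarrow> real.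
            n \<ge> 1 \<longrightarrow> t > 0 \<longrightarrow>
              convex_on UNIV (\<lambda>x. LSE n t (\<lambda>i. W i \<bullet> x + a i))
            \<and> (\<forall>x. ((\<lambda>y. LSE n t (\<lambda>i. W i \<bullet> y + a i)) has_derivative
                        (\<lambda>h. softmax_approx n t W a x \<bullet> h)) (at x)))"
proof (intro conjI allI impI)
  fix \<epsilon> :: real assume "\<epsilon> > 0"
  let ?S = "open_cube (-\<delta>) (1+\<delta>) :: (real^'d) set"
  let ?K = "closed_cube (-(\<delta>/2)) (1+\<delta>/2) :: (real^'d) set"
  have convex: "convex_on ?S F"
    by (intro convex_on_subset[OF assms(2) open_cube_subset_closed_cube])
      (simp add: open_cube_eq_box convex_box)
  have compact: "compact ?K" by (simp add: closed_cube_eq_cbox)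
  have inside: "?K \<subseteq> ?S" using assms(1) by (intro closed_cube_subset_open_cube) auto
  have margin: "cball x (\<delta>/2) \<subseteq> ?K" if "x \<in> closed_cube 0 1" for x
    using cball_subset_closed_cube[OF that] by simp
  obtain n t W a where "n \<ge> 1" "t > 0"
    and approx: "\<And>x. x \<in> closed_cube 0 1 \<Longrightarrow> norm (gradF x - softmax_approx n t W a x) \<le> \<epsilon> / 2"
    using softmax_approx_of_convex_gradient[OF convex assms(4,5) compact inside
        half_gt_zero[OF assms(1)] margin half_gt_zero[OF \<open>\<epsilon> > 0\<close>]] by blast
  have "closed_cube 0 1 \<noteq> ({} :: (real^'d) set)" by (auto simp: closed_cube_def intro!: exI[of _ 0])
  then have "(SUP x\<in>closed_cube 0 1. norm (gradF x - softmax_approx n t W a x)) \<le> \<epsilon> / 2"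
    by (intro cSUP_least approx)
  then show "\<exists>n t W a. n \<ge> 1 \<and> t > 0 \<and>
      (SUP x\<in>closed_cube 0 1. norm (gradF x - softmax_approx n t W a x)) < \<epsilon>"
    using \<open>n \<ge> 1\<close> \<open>t > 0\<close> \<open>\<epsilon> > 0\<close> by (intro exI[of _ n] exI[of _ t] exI[of _ W] exI[of _ a]) auto
qed (simp_all add: convex_on_LSE_affine LSE_affine_has_derivative)

end
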